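(* Let $n=2^\ell$, and let $S=\{u_1,\dots,u_m\}\subseteq\mathbb{F}_2^d\setminus\{0\}$ be a set of $m$ distinct nonzero vectors. Let $h:\mathbb{F}_2^d\to\mathbb{F}_2^\ell$ be a uniformly random linear map. Fix $y\in\mathbb{F}_2^\ell$ and define $Z_y:=|\{i:h(u_i)=y\}|$, and let $\lambda:=m/n$. Then for every integer $r\ge0$, with $a:=\lceil\log(r+2)\rceil$, \[ \Pr[Z_y>r]\le\lambda^a\left(\prod_{j=0}^{a-1}(r+2-2^j)\right)^{-1}. \]
   Context: $\log$ denotes the base-$2$ logarithm. A uniformly random linear map is chosen uniformly among all linear maps $\mathbb{F}_2^d\to\mathbb{F}_2^\ell$. *)

theory Defs
  imports "HOL-Probability.Probability"
begin

text \<open>Vectors of F_2^d are represented as functions nat => bool (True = 1) that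
vanish outside {0..<d}.  Addition is coordinatewise exclusive or.\<close>

definition F2vec :: "nat \<Rightarrow> (nat \<Rightarrow> bool) set" where
  "F2vec d = {x. \<forall>i. d \<le> i \<longrightarrow> \<not> x i}"

definition vzero :: "nat \<Rightarrow> bool" where
  "vzero = (\<lambda>_. False)"

definition vadd :: "(nat \<Rightarrow> bool) \<Rightarrow> (nat \<Rightarrow> bool) \<Rightarrow> (nat \<Rightarrow> bool)" where
  "vadd x y = (\<lambda>i. x i \<noteq> y i)"

text \<open>Linear maps F_2^d -> F_2^l (over F_2, additivity is linearity), made
extensional (value vzero outside F_2^d) so that the set of them is finite.\<close>

definition linmaps :: "nat \<Rightarrow> nat \<Rightarrow> ((nat \<Rightarrow> bool) \<Rightarrow> (nat \<Rightarrow> bool)) set" where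
  "linmaps d l = {h. (\<forall>x\<in>F2vec d. h x \<in> F2vec l)
                   \<and> (\<forall>x\<in>F2vec d. \<forall>y\<in>F2vec d. h (vadd x y) = vadd (h x) (h y))
                   \<and> (\<forall>x. x \<notin> F2vec d \<longrightarrow> h x = vzero)}"

end

theory Submission
  imports Defs "HOL-Library.Z2" "HOL-Library.Function_Algebras"
begin

text \<open>If more than r of the vectors u_i are sent to y, these at least r + 1 nonzero
vectors contain at least \<Prod>j<a. (r + 2 - 2^j) ordered independent a-tuples: the j-th
entry must avoid the 2^j - 1 nonzero vectors of the span of the previous ones, and
the choice of a makes every factor positive.  On
the other hand a uniformly random linear map sends a fixed independent a-tuple to
(y, ..., y) with probability exactly n^-a, so the expected number of independent
a-tuples of S sent to y is at most m^a / n^a.  Markov's inequality concludes.\<close>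

lemma F2vec_eq_image_Pow: "F2vec l = (\<lambda>A i. i \<in> A) ` Pow {..<l}"
proof
  show "F2vec l \<subseteq> (\<lambda>A i. i \<in> A) ` Pow {..<l}"
  proof
    fix x assume "x \<in> F2vec l"
    then have "{i. x i} \<in> Pow {..<l}" by (auto simp: F2vec_def not_le[symmetric])
    then show "x \<in> (\<lambda>A i. i \<in> A) ` Pow {..<l}" by (rule rev_image_eqI) simp
  qed
qed (auto simp: F2vec_def)

lemma finite_F2vec: "finite (F2vec l)"
  unfolding F2vec_eq_image_Pow by simp

lemma card_F2vec: "card (F2vec l) = 2 ^ l"
proof -
  have "inj_on (\<lambda>A i. i \<in> A) (Pow {..<l})"
    by (rule inj_onI) (auto simp: fun_eq_iff)
  then show ?thesis unfolding F2vec_eq_image_Pow by (simp add: card_image card_Pow)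
qed

lemma vzero_in_F2vec [simp]: "vzero \<in> F2vec l"
  by (simp add: F2vec_def vzero_def)

lemma vadd_in_F2vec [simp]: "x \<in> F2vec l \<Longrightarrow> y \<in> F2vec l \<Longrightarrow> vadd x y \<in> F2vec l"
  by (simp add: F2vec_def vadd_def)

lemma vadd_cancel_left [simp]: "vadd x (vadd x z) = z"
  by (auto simp: vadd_def fun_eq_iff)

lemma vadd_cancel_right [simp]: "vadd (vadd z x) x = z"
  by (auto simp: vadd_def fun_eq_iff)

lemma vadd_vadd_swap: "vadd (vadd a b) (vadd c e) = vadd (vadd a c) (vadd b e)"
  by (auto simp: vadd_def fun_eq_iff)

lemma vadd_vzero [simp]: "vadd x vzero = x"
  by (simp add: vadd_def vzero_def)

lemma linmaps_nonempty: "linmaps d l \<noteq> {}"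
proof -
  have "(\<lambda>_. vzero) \<in> linmaps d l" by (simp add: linmaps_def)
  then show ?thesis by blast
qed

lemma linmaps_add:
  "h \<in> linmaps d l \<Longrightarrow> g \<in> linmaps d l \<Longrightarrow> (\<lambda>x. vadd (h x) (g x)) \<in> linmaps d l"
  by (auto simp: linmaps_def vadd_vadd_swap)

lemma finite_linmaps: "finite (linmaps d l)"
proof -
  let ?ext = "\<lambda>h x. if x \<in> F2vec d then h x else vzero"
  have "linmaps d l \<subseteq> ?ext ` (F2vec d \<rightarrow>\<^sub>E F2vec l)"
  proof
    fix h assume h: "h \<in> linmaps d l"
    then have "h = ?ext (restrict h (F2vec d))"
      by (auto simp: linmaps_def fun_eq_iff)
    moreover have "restrict h (F2vec d) \<in> F2vec d \<rightarrow>\<^sub>E F2vec l"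
      using h by (auto simp: linmaps_def)
    ultimately show "h \<in> ?ext ` (F2vec d \<rightarrow>\<^sub>E F2vec l)" by blast
  qed
  then show ?thesis
    by (rule finite_subset) (simp add: finite_PiE finite_F2vec)
qed

subsection \<open>The vector space of bit sequences\<close>

definition bscale :: "bit \<Rightarrow> (nat \<Rightarrow> bit) \<Rightarrow> (nat \<Rightarrow> bit)" where
  "bscale c v = (\<lambda>i. c * v i)"

interpretation F2: vector_space bscale
  by unfold_locales (auto simp: bscale_def fun_eq_iff algebra_simps)

interpretation F2_pair: vector_space_pair bscale bscale ..

definition bits :: "(nat \<Rightarrow> bool) \<Rightarrow> (nat \<Rightarrow> bit)" where
  "bits x = (\<lambda>i. of_bool (x i))"

lemma inj_bits: "inj bits"
  by (rule injI) (auto simp: bits_def fun_eq_iff of_bool_eq_iff)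

lemma bits_vadd: "bits (vadd x y) = bits x + bits y"
  by (auto simp: bits_def vadd_def fun_eq_iff)

lemma bits_eq_0_iff: "bits x = 0 \<longleftrightarrow> x = vzero"
  by (auto simp: bits_def vzero_def fun_eq_iff)

lemma bit_add_eq_1_iff: "a + b = (1 :: bit) \<longleftrightarrow> (a = 1) \<noteq> (b = 1)"
  by (cases a; cases b) simp_all

lemma UNIV_bit: "(UNIV :: bit set) = {0, 1}"
  by (auto intro: bit.exhaust)

lemma card_UNIV_bit: "card (UNIV :: bit set) = 2"
  by (simp add: UNIV_bit)

lemma F2_span_subset_combinations:
  assumes "finite B"
  shows "F2.span B \<subseteq> (\<lambda>u. \<Sum>v\<in>B. bscale (u v) v) ` (B \<rightarrow>\<^sub>E UNIV)"
proof
  fix x assume "x \<in> F2.span B"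
  then obtain u where "x = (\<Sum>v\<in>B. bscale (u v) v)"
    unfolding F2.span_finite[OF assms] by blast
  also have "\<dots> = (\<Sum>v\<in>B. bscale (restrict u B v) v)" by (rule sum.cong) simp_all
  finally show "x \<in> (\<lambda>u. \<Sum>v\<in>B. bscale (u v) v) ` (B \<rightarrow>\<^sub>E UNIV)"
    by (intro image_eqI[where x = "restrict u B"]) simp_all
qed

lemma finite_F2_span:
  assumes "finite B"
  shows "finite (F2.span B)"
proof -
  have "finite (B \<rightarrow>\<^sub>E (UNIV :: bit set))" using assms by (simp add: finite_PiE UNIV_bit)
  then show ?thesis using F2_span_subset_combinations[OF assms] by (meson finite_imageI finite_subset)
qed

lemma card_F2_span_le:
  assumes "finite B"
  shows "card (F2.span B) \<le> 2 ^ card B"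
proof -
  let ?coeffs = "B \<rightarrow>\<^sub>E (UNIV :: bit set)"
  have fin: "finite ?coeffs" using assms by (simp add: finite_PiE UNIV_bit)
  have "card (F2.span B) \<le> card ((\<lambda>u. \<Sum>v\<in>B. bscale (u v) v) ` ?coeffs)"
    using fin by (intro card_mono F2_span_subset_combinations assms) simp
  also have "\<dots> \<le> card ?coeffs" using fin by (rule card_image_le)
  also have "\<dots> = 2 ^ card B" using assms by (simp add: card_PiE card_UNIV_bit)
  finally show ?thesis .
qed

lemma linmaps_extend:
  assumes indep: "F2.independent (bits ` B)" and B: "B \<subseteq> F2vec d"
    and f: "\<And>v. v \<in> B \<Longrightarrow> f v \<in> F2vec l"
  shows "\<exists>h\<in>linmaps d l. \<forall>v\<in>B. h v = f v"
proof -
  let ?unbits = "\<lambda>w i. w i = (1 :: bit)"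
  obtain G where "Vector_Spaces.linear bscale bscale G"
    and G_ext: "\<forall>w\<in>bits ` B. G w = bits (f (?unbits w))"
    using F2_pair.linear_independent_extend[OF indep, where f = "\<lambda>w. bits (f (?unbits w))"]
    by blast
  then have G_add: "G (w + w') = G w + G w'" for w w'
    by (simp add: Vector_Spaces.linear_iff)
  \<comment> \<open>G (bits x) may have nonzero coordinates at or above l; truncating them is linear.\<close>
  define h where
    "h x = (if x \<in> F2vec d then (\<lambda>i. i < l \<and> ?unbits (G (bits x)) i) else vzero)" for x
  have "h \<in> linmaps d l"
    unfolding linmaps_def
  proof (intro CollectI conjI ballI allI impI)
    fix x y assume xy: "x \<in> F2vec d" "y \<in> F2vec d"
    then have "h (vadd x y) = (\<lambda>i. i < l \<and> (G (bits x) i = 1) \<noteq> (G (bits y) i = 1))"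
      by (simp add: h_def bits_vadd G_add bit_add_eq_1_iff)
    with xy show "h (vadd x y) = vadd (h x) (h y)"
      by (auto simp: h_def vadd_def fun_eq_iff)
  qed (auto simp: h_def F2vec_def)
  moreover have "h v = f v" if "v \<in> B" for v
  proof -
    have "G (bits v) = bits (f v)" using G_ext that by (simp add: bits_def)
    then show ?thesis using that B f[OF that]
      by (auto simp: h_def bits_def F2vec_def fun_eq_iff) (meson not_le)
  qed
  ultimately show ?thesis by blast
qed

subsection \<open>Independent tuples\<close>

definition indep_list :: "(nat \<Rightarrow> bool) list \<Rightarrow> bool" where
  "indep_list vs \<longleftrightarrow> distinct vs \<and> F2.independent (bits ` set vs)"

definition indep_tuples :: "(nat \<Rightarrow> bool) set \<Rightarrow> nat \<Rightarrow> (nat \<Rightarrow> bool) list set" where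
  "indep_tuples T k = {vs. set vs \<subseteq> T \<and> length vs = k \<and> indep_list vs}"

lemma indep_list_ConsD: "indep_list (t # vs) \<Longrightarrow> indep_list vs"
  unfolding indep_list_def using F2.independent_mono[OF _ subset_insertI] by auto

lemma indep_list_ConsI:
  assumes "indep_list vs" and "bits t \<notin> F2.span (bits ` set vs)"
  shows "indep_list (t # vs)"
  using assms F2.independent_insertI[OF assms(2)] F2.span_base
  unfolding indep_list_def by fastforce

lemma card_dependent_extensions_le:
  assumes "indep_list vs" and "finite T" and "vzero \<notin> T"
  shows "card {t\<in>T. \<not> indep_list (t # vs)} \<le> 2 ^ length vs - 1"
proof -
  let ?V = "F2.span (bits ` set vs)"
  have fin: "finite ?V" by (simp add: finite_F2_span)
  have "card {t\<in>T. \<not> indep_list (t # vs)} \<le> card {t\<in>T. bits t \<in> ?V}"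
    using indep_list_ConsI[OF assms(1)] \<open>finite T\<close> by (intro card_mono) auto
  also have "\<dots> \<le> card (?V - {0})"
    using \<open>vzero \<notin> T\<close> fin
    by (intro card_inj_on_le[where f = bits] inj_on_subset[OF inj_bits])
       (auto simp: bits_eq_0_iff)
  also have "\<dots> = card ?V - 1" using fin by (simp add: F2.span_zero)
  also have "card ?V \<le> 2 ^ length vs"
    using card_F2_span_le[of "bits ` set vs"] assms(1)
    by (simp add: indep_list_def card_image inj_on_subset[OF inj_bits] distinct_card)
  finally show ?thesis by linarith
qed

lemma finite_indep_tuples: "finite T \<Longrightarrow> finite (indep_tuples T k)"
  unfolding indep_tuples_def
  by (rule finite_subset[OF _ finite_lists_length_eq[of T k]]) blast

lemma card_indep_tuples_le:
  assumes "finite T"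
  shows "card (indep_tuples T k) \<le> card T ^ k"
proof -
  have "card (indep_tuples T k) \<le> card {xs. set xs \<subseteq> T \<and> length xs = k}"
    using assms by (intro card_mono finite_lists_length_eq) (auto simp: indep_tuples_def)
  then show ?thesis using assms by (simp add: card_lists_length_eq)
qed

lemma indep_tuples_Suc:
  "indep_tuples T (Suc k) =
     (\<lambda>(vs, t). t # vs) ` (SIGMA vs:indep_tuples T k. {t\<in>T. indep_list (t # vs)})"
proof
  show "indep_tuples T (Suc k) \<subseteq>
          (\<lambda>(vs, t). t # vs) ` (SIGMA vs:indep_tuples T k. {t\<in>T. indep_list (t # vs)})"
  proof
    fix ws assume ws: "ws \<in> indep_tuples T (Suc k)"
    then obtain t vs where ws_eq: "ws = t # vs" unfolding indep_tuples_def by (cases ws) auto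
    with ws have "(vs, t) \<in> (SIGMA vs:indep_tuples T k. {t\<in>T. indep_list (t # vs)})"
      by (auto simp: indep_tuples_def dest: indep_list_ConsD)
    then show "ws \<in> (\<lambda>(vs, t). t # vs) `
                 (SIGMA vs:indep_tuples T k. {t\<in>T. indep_list (t # vs)})"
      unfolding ws_eq by (rule rev_image_eqI) simp
  qed
qed (auto simp: indep_tuples_def)

lemma card_indep_tuples_ge:
  assumes "finite T" and "vzero \<notin> T"
  shows "(\<Prod>j<k. card T + 1 - 2 ^ j) \<le> card (indep_tuples T k)"
proof (induction k)
  case 0
  have "indep_tuples T 0 = {[]}"
    by (auto simp: indep_tuples_def indep_list_def F2.independent_empty)
  then show ?case by simp
next
  case (Suc k)
  have extensions: "card T + 1 - 2 ^ k \<le> card {t\<in>T. indep_list (t # vs)}"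
    if "vs \<in> indep_tuples T k" for vs
  proof -
    have "card {t\<in>T. \<not> indep_list (t # vs)} \<le> 2 ^ k - 1"
      using that card_dependent_extensions_le[of vs T] assms
      by (simp add: indep_tuples_def)
    moreover have "card {t\<in>T. indep_list (t # vs)} + card {t\<in>T. \<not> indep_list (t # vs)} = card T"
      using card_Int_Diff[OF assms(1), of "{t. indep_list (t # vs)}"]
      by (simp add: Int_def set_diff_eq)
    moreover have "1 \<le> (2::nat) ^ k" by simp
    ultimately show ?thesis by linarith
  qed
  have "(\<Prod>j<Suc k. card T + 1 - 2 ^ j) = (\<Prod>j<k. card T + 1 - 2 ^ j) * (card T + 1 - 2 ^ k)"
    by simp
  also have "\<dots> \<le> card (indep_tuples T k) * (card T + 1 - 2 ^ k)"
    using Suc by (rule mult_right_mono) simp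
  also have "\<dots> \<le> (\<Sum>vs\<in>indep_tuples T k. card {t\<in>T. indep_list (t # vs)})"
    using sum_mono[OF extensions] by simp
  also have "\<dots> = card (SIGMA vs:indep_tuples T k. {t\<in>T. indep_list (t # vs)})"
    using assms(1) by (simp add: card_SigmaI finite_indep_tuples)
  also have "\<dots> = card (indep_tuples T (Suc k))"
    unfolding indep_tuples_Suc by (rule card_image[symmetric]) (rule inj_onI, auto)
  finally show ?case .
qed

lemma card_indep_tuples_in_fiber_ge:
  assumes "finite S" and "vzero \<notin> S" and "r < card {u\<in>S. h u = y}"
  shows "(\<Prod>j<k. r + 2 - 2 ^ j) \<le> card {vs\<in>indep_tuples S k. \<forall>v\<in>set vs. h v = y}"
proof -
  let ?T = "{u\<in>S. h u = y}"
  have "(\<Prod>j<k. r + 2 - 2 ^ j) \<le> (\<Prod>j<k. card ?T + 1 - 2 ^ j)"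
    using assms(3) by (intro prod_mono) auto
  also have "\<dots> \<le> card (indep_tuples ?T k)"
    using assms(1,2) by (intro card_indep_tuples_ge) auto
  also have "\<dots> \<le> card {vs\<in>indep_tuples S k. \<forall>v\<in>set vs. h v = y}"
    using assms(1) by (intro card_mono) (simp add: finite_indep_tuples, auto simp: indep_tuples_def)
  finally show ?thesis .
qed

text \<open>Adding to the maps of the fibre over (y, ..., y) a fixed linear map sending the tuple
to (y + t_1, ..., y + t_k) injects the fibre into the fibre over (t_1, ..., t_k), for every
one of the n^k targets.\<close>

lemma card_fiber_mult_le:
  assumes indep: "indep_list vs" and "set vs \<subseteq> F2vec d" and "y \<in> F2vec l"
  shows "card {h\<in>linmaps d l. \<forall>v\<in>set vs. h v = y} * (2 ^ l) ^ length vs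
           \<le> card (linmaps d l)"
proof -
  let ?L = "linmaps d l"
  let ?fiber = "{h\<in>?L. \<forall>v\<in>set vs. h v = y}"
  let ?targets = "set vs \<rightarrow>\<^sub>E F2vec l"
  define shift where
    "shift t = (SOME g. g \<in> ?L \<and> (\<forall>v\<in>set vs. g v = vadd y (t v)))" for t
  have shift: "shift t \<in> ?L \<and> (\<forall>v\<in>set vs. shift t v = vadd y (t v))" if "t \<in> ?targets" for t
  proof -
    have "\<exists>g\<in>?L. \<forall>v\<in>set vs. g v = vadd y (t v)"
      using assms that by (intro linmaps_extend) (auto simp: indep_list_def PiE_iff)
    then show ?thesis unfolding shift_def by (rule someI2_bex) blast
  qed
  let ?move = "\<lambda>(h, t) x. vadd (h x) (shift t x)"
  have moved: "?move (h, t) v = t v"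
    if "\<forall>v\<in>set vs. h v = y" "t \<in> ?targets" "v \<in> set vs" for h t v
    using that shift by simp
  have "inj_on ?move (?fiber \<times> ?targets)"
  proof (rule inj_onI)
    fix p p' assume "p \<in> ?fiber \<times> ?targets" "p' \<in> ?fiber \<times> ?targets"
      and eq: "?move p = ?move p'"
    then obtain h t h' t' where p: "p = (h, t)" "p' = (h', t')"
      and h: "\<forall>v\<in>set vs. h v = y" and t: "t \<in> ?targets"
      and h': "\<forall>v\<in>set vs. h' v = y" and t': "t' \<in> ?targets"
      by (cases p, cases p') auto
    have "t v = t' v" if "v \<in> set vs" for v
      using moved[OF h t that] moved[OF h' t' that] fun_cong[OF eq, of v] p by simp
    with t t' have "t = t'" by (rule PiE_ext)
    have "h x = h' x" for x
    proof -
      have "h x = vadd (?move (h, t) x) (shift t x)" by simp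
      also have "\<dots> = vadd (?move (h', t') x) (shift t' x)" using eq p \<open>t = t'\<close> by simp
      also have "\<dots> = h' x" by simp
      finally show ?thesis .
    qed
    with p \<open>t = t'\<close> show "p = p'" by auto
  qed
  moreover have "?move ` (?fiber \<times> ?targets) \<subseteq> ?L"
    using shift linmaps_add by auto
  ultimately have "card (?fiber \<times> ?targets) \<le> card ?L"
    using finite_linmaps by (rule card_inj_on_le)
  moreover have "card ?targets = (2 ^ l) ^ length vs"
    using indep by (simp add: card_PiE card_F2vec indep_list_def distinct_card)
  ultimately show ?thesis by (simp add: card_cartesian_product)
qed

subsection \<open>The first-moment bound\<close>

lemma double_counting_le:
  fixes Q :: "'a \<Rightarrow> 'b \<Rightarrow> bool"
  assumes "finite L" and "finite I" and "E \<subseteq> L"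
    and "\<And>h. h \<in> E \<Longrightarrow> p \<le> card {i\<in>I. Q h i}"
    and "\<And>i. i \<in> I \<Longrightarrow> card {h\<in>L. Q h i} * c \<le> N"
  shows "card E * p * c \<le> card I * N"
proof -
  have "card E * p \<le> (\<Sum>h\<in>E. card {i\<in>I. Q h i})"
    using sum_mono[of E "\<lambda>_. p"] assms(4) by simp
  also have "\<dots> \<le> (\<Sum>h\<in>L. card {i\<in>I. Q h i})"
    using assms(1,3) by (intro sum_mono2) auto
  also have "\<dots> = (\<Sum>h\<in>L. \<Sum>i\<in>I. of_bool (Q h i))"
    using assms(2) by (simp add: Int_def)
  also have "\<dots> = (\<Sum>i\<in>I. \<Sum>h\<in>L. of_bool (Q h i))"
    by (rule sum.swap)
  also have "\<dots> = (\<Sum>i\<in>I. card {h\<in>L. Q h i})"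
    using assms(1) by (simp add: Int_def)
  finally have "card E * p * c \<le> (\<Sum>i\<in>I. card {h\<in>L. Q h i}) * c"
    by (rule mult_right_mono) simp
  also have "\<dots> = (\<Sum>i\<in>I. card {h\<in>L. Q h i} * c)"
    by (rule sum_distrib_right)
  also have "\<dots> \<le> card I * N"
    using sum_mono[of I _ "\<lambda>_. N"] assms(5) by simp
  finally show ?thesis .
qed

lemma card_maps_with_large_fiber_le:
  assumes "S \<subseteq> F2vec d - {vzero}" and "y \<in> F2vec l"
  shows "card (linmaps d l \<inter> {h. card {u \<in> S. h u = y} > r})
           * (\<Prod>j<k. r + 2 - 2 ^ j) * (2 ^ l) ^ k
         \<le> card S ^ k * card (linmaps d l)"
proof -
  let ?L = "linmaps d l"
  have S: "finite S" "S \<subseteq> F2vec d" "vzero \<notin> S"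
    using assms(1) finite_subset[OF _ finite_F2vec] by auto
  have "card (?L \<inter> {h. card {u \<in> S. h u = y} > r}) * (\<Prod>j<k. r + 2 - 2 ^ j) * (2 ^ l) ^ k
          \<le> card (indep_tuples S k) * card ?L"
  proof (rule double_counting_le[where Q = "\<lambda>h vs. \<forall>v\<in>set vs. h v = y"])
    fix h assume "h \<in> ?L \<inter> {h. card {u \<in> S. h u = y} > r}"
    with S show "(\<Prod>j<k. r + 2 - 2 ^ j) \<le> card {vs \<in> indep_tuples S k. \<forall>v\<in>set vs. h v = y}"
      by (intro card_indep_tuples_in_fiber_ge) auto
  next
    fix vs assume "vs \<in> indep_tuples S k"
    then show "card {h \<in> ?L. \<forall>v\<in>set vs. h v = y} * (2 ^ l) ^ k \<le> card ?L"
      using card_fiber_mult_le[of vs d y l] S assms(2) by (auto simp: indep_tuples_def)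
  qed (use S in \<open>auto simp: finite_linmaps finite_indep_tuples\<close>)
  also have "\<dots> \<le> card S ^ k * card ?L"
    using card_indep_tuples_le[OF S(1)] by simp
  finally show ?thesis .
qed

lemma two_pow_le_of_less_ceiling_log:
  assumes "j < nat \<lceil>log 2 (real r + 2)\<rceil>"
  shows "2 ^ j \<le> r + 1"
proof -
  have "real j < log 2 (real r + 2)" using assms by linarith
  then have "2 powr real j < real r + 2"
    by (simp add: less_log_iff)
  then have "real (2 ^ j) < real (r + 2)"
    by (simp add: powr_realpow)
  then show ?thesis by linarith
qed

lemma prob_pmf_of_set_le_of_card:
  assumes "finite L" and "L \<noteq> {}" and "0 < c"
    and "card (L \<inter> E) * c \<le> M * card L"
  shows "measure_pmf.prob (pmf_of_set L) E \<le> real M / real c"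
proof -
  have "0 < card L" using assms(1,2) by (simp add: card_gt_0_iff)
  moreover have "real (card (L \<inter> E)) * real c \<le> real M * real (card L)"
    using assms(4) by (simp flip: of_nat_mult)
  ultimately have "real (card (L \<inter> E)) / real (card L) \<le> real M / real c"
    using assms(3) by (simp add: field_simps)
  then show ?thesis using assms(1,2) by (simp add: measure_pmf_of_set)
qed

theorem theoremB1:
  fixes d l r :: nat and S :: "(nat \<Rightarrow> bool) set" and y :: "nat \<Rightarrow> bool"
  assumes "S \<subseteq> F2vec d - {vzero}"
    and "y \<in> F2vec l"
  shows "measure_pmf.prob (pmf_of_set (linmaps d l))
           {h. card {u \<in> S. h u = y} > r}
         \<le> (real (card S) / 2 ^ l) ^ (nat \<lceil>log 2 (real r + 2)\<rceil>)
           / (\<Prod>j<nat \<lceil>log 2 (real r + 2)\<rceil>. (real r + 2 - 2 ^ j))"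
proof -
  let ?L = "linmaps d l" and ?E = "{h. card {u \<in> S. h u = y} > r}"
  define a where "a = nat \<lceil>log 2 (real r + 2)\<rceil>"
  define P where "P = (\<Prod>j<a. r + 2 - 2 ^ j)"
  have pow: "\<forall>j<a. 2 ^ j \<le> r + 1"
    using two_pow_le_of_less_ceiling_log unfolding a_def by blast
  have "card (?L \<inter> ?E) * ((2 ^ l) ^ a * P) \<le> card S ^ a * card ?L"
    using card_maps_with_large_fiber_le[OF assms, of r a] unfolding P_def by (simp only: mult_ac)
  then have "measure_pmf.prob (pmf_of_set ?L) ?E \<le> real (card S ^ a) / real ((2 ^ l) ^ a * P)"
    using pow by (intro prob_pmf_of_set_le_of_card finite_linmaps linmaps_nonempty)
      (auto simp: P_def intro!: prod_pos)
  also have "\<dots> = (real (card S) / 2 ^ l) ^ a / real P"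
    by (simp only: of_nat_mult of_nat_power of_nat_numeral power_divide divide_divide_eq_left)
  also have "real P = (\<Prod>j<a. real r + 2 - 2 ^ j)"
    using pow by (auto simp: P_def of_nat_diff intro!: prod.cong)
  finally show ?thesis unfolding a_def .
qed

end
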